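(* Let $m$ be a nonnegative integer and $F$ a distribution function with finite $m$-th absolute moment. In $(\mathbb R_m[\mathrm D],\circ)$, $$\mathsf L_{F,m}^{-1}=\sum_{k=0}^m(\mathrm{Id}-\mathsf L_{F,m})^{\circ k}=\sum_{j=0}^m(-1)^j\mathsf L_{F,m}^{\circ j}\sum_{k=j}^m\binom{k}{j}.$$
   Context: $(\mathbb R_m[\mathrm D],\circ)$ is the ring of polynomials in $\mathrm D$ of degree at most $m$ with multiplication of polynomials modulo $\mathrm D^{m+1}$; $\mathrm{Id}$ is its unit $\mathrm D^0$. For $T$ in this ring, $T^{\circ0}=\mathrm{Id}$ and $T^{\circ k}=T\circ T^{\circ(k-1)}$. $\mu_{F,k}=\int x^k\,dF(x)$ and $\mathsf L_{F,m}=\sum_{k=0}^m\frac{(-1)^k}{k!}\mu_{F,k}\mathrm D^k$. *)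

theory Defs
  imports "HOL-Analysis.Analysis" "HOL-Computational_Algebra.Polynomial"
begin

definition distribution_function :: "(real \<Rightarrow> real) \<Rightarrow> bool" where
  "distribution_function F \<longleftrightarrow> mono F \<and> (\<forall>x. continuous (at_right x) F)
     \<and> (F \<longlongrightarrow> 0) at_bot \<and> (F \<longlongrightarrow> 1) at_top"

definition moment :: "(real \<Rightarrow> real) \<Rightarrow> nat \<Rightarrow> real" where
  "moment F k = integral\<^sup>L (interval_measure F) (\<lambda>x. x ^ k)"

text \<open>Elements of R_m[D] are real polynomials in D of degree at most m;
  multiplication is ordinary multiplication truncated modulo D^(m+1).\<close>
definition in_Rm :: "nat \<Rightarrow> real poly \<Rightarrow> bool" where
  "in_Rm m p \<longleftrightarrow> degree p \<le> m"

definition tmult :: "nat \<Rightarrow> real poly \<Rightarrow> real poly \<Rightarrow> real poly" where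
  "tmult m p q = (\<Sum>k\<le>m. monom (coeff (p * q) k) k)"

primrec tpow :: "nat \<Rightarrow> real poly \<Rightarrow> nat \<Rightarrow> real poly" where
  "tpow m T 0 = 1"
| "tpow m T (Suc k) = tmult m T (tpow m T k)"

definition LF :: "(real \<Rightarrow> real) \<Rightarrow> nat \<Rightarrow> real poly" where
  "LF F m = (\<Sum>k\<le>m. monom ((-1) ^ k / fact k * moment F k) k)"

end

theory Submission
  imports Defs "HOL-Probability.Distribution_Functions"
begin

text \<open>Only the zeroth moment enters: \<open>\<mu>\<^sub>0 = 1\<close> because \<open>F\<close> is a distribution
  function. Thus \<open>L = L\<^sub>F\<^sub>,\<^sub>m\<close> has constant term 1,
  \<open>N = Id - L\<close> is divisible by \<open>D\<close>, and \<open>N\<^sup>m\<^sup>+\<^sup>1 = 0\<close> modulo \<open>D\<^sup>m\<^sup>+\<^sup>1\<close>; hence the truncated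
  geometric series \<open>\<Sum>\<^sub>k\<^sub>\<le>\<^sub>m N\<^sup>k\<close> inverts \<open>L = Id - N\<close>. The second formula is the
  binomial expansion of each \<open>(Id - L)\<^sup>k\<close> with the two sums interchanged.\<close>

lemma moment_0_distribution_function:
  assumes "distribution_function F"
  shows "moment F 0 = 1"
proof -
  have "mono F" "\<And>x. continuous (at_right x) F" "(F \<longlongrightarrow> 0) at_bot" "(F \<longlongrightarrow> 1) at_top"
    using assms by (auto simp: distribution_function_def)
  then have "emeasure (interval_measure F) UNIV = ennreal 1"
    by (intro interval_measure_UNIV) (auto simp: monoD)
  then show ?thesis
    by (simp add: moment_def measure_def)
qed

lemma coeff_LF_0: "coeff (LF F m) 0 = moment F 0"
  by (simp add: LF_def coeff_sum coeff_monom)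

lemma sum_power_one_minus:
  fixes x :: "'a::comm_ring_1"
  shows "(\<Sum>k\<le>m. (1 - x) ^ k) = (\<Sum>j\<le>m. (-1) ^ j * of_nat (\<Sum>k=j..m. k choose j) * x ^ j)"
proof -
  have binomial: "(1 - x) ^ k = (\<Sum>j\<le>m. of_nat (k choose j) * (- x) ^ j)" if "k \<le> m" for k
  proof -
    have "(1 - x) ^ k = (\<Sum>j\<le>k. of_nat (k choose j) * (- x) ^ j)"
      using binomial_ring[of "- x" 1 k] by simp
    also have "\<dots> = (\<Sum>j\<le>m. of_nat (k choose j) * (- x) ^ j)"
      using that by (intro sum.mono_neutral_left) (auto simp: binomial_eq_0)
    finally show ?thesis .
  qed
  have "(\<Sum>k\<le>m. (1 - x) ^ k) = (\<Sum>k\<le>m. \<Sum>j\<le>m. of_nat (k choose j) * (- x) ^ j)"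
    by (simp add: binomial)
  also have "\<dots> = (\<Sum>j\<le>m. \<Sum>k\<le>m. of_nat (k choose j) * (- x) ^ j)"
    by (rule sum.swap)
  also have "\<dots> = (\<Sum>j\<le>m. \<Sum>k=j..m. of_nat (k choose j) * (- x) ^ j)"
    by (intro sum.cong refl sum.mono_neutral_right) (auto simp: binomial_eq_0)
  also have "\<dots> = (\<Sum>j\<le>m. of_nat (\<Sum>k=j..m. k choose j) * (- x) ^ j)"
    by (simp add: sum_distrib_right)
  also have "\<dots> = (\<Sum>j\<le>m. (-1) ^ j * of_nat (\<Sum>k=j..m. k choose j) * x ^ j)"
    by (simp add: power_minus[of x] mult.left_commute mult.assoc)
      \<comment> \<open>uninstantiated, \<open>power_minus\<close> loops on \<open>(-1) ^ j\<close>\<close>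
  finally show ?thesis .
qed

lemma poly_mod_sum_left:
  fixes f :: "'b \<Rightarrow> 'a::field poly"
  shows "(\<Sum>i\<in>A. f i) mod z = (\<Sum>i\<in>A. f i mod z)"
  by (induction A rule: infinite_finite_induct) (auto simp: poly_mod_add_left)

lemma monom_dvd_power_if_coeff_0:
  fixes p :: "'a::comm_semiring_1 poly"
  assumes "coeff p 0 = 0"
  shows "monom 1 n dvd p ^ n"
proof -
  have "monom 1 1 dvd p"
    using assms by (simp add: monom_1_dvd_iff')
  then have "monom 1 1 ^ n dvd p ^ n"
    by (rule dvd_power_same)
  moreover have "monom 1 1 ^ n = (monom 1 n :: 'a poly)"
    using monom_power[of "1::'a" 1 n] by simp
  ultimately show ?thesis
    by simp
qed

lemma mult_sum_power_one_minus_mod_monom: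
  fixes p :: "'a::field poly"
  assumes "coeff p 0 = 1"
  shows "p * (\<Sum>k\<le>m. (1 - p) ^ k) mod monom 1 (Suc m) = 1"
proof -
  have "monom 1 (Suc m) dvd (1 - p) ^ Suc m"
    using assms by (intro monom_dvd_power_if_coeff_0) simp
  moreover have "p * (\<Sum>k\<le>m. (1 - p) ^ k) = 1 - (1 - p) ^ Suc m"
    using sum_gp_basic[of "1 - p" m] by simp
  ultimately show ?thesis
    by (simp add: poly_mod_diff_left mod_poly_less degree_monom_eq)
qed

lemma tmult_eq_mod: "tmult m p q = p * q mod monom 1 (Suc m)"
proof -
  define r where "r = p * q"
  define t where "t = (\<Sum>k\<le>m. monom (coeff r k) k)"
  have coeff_t: "coeff t k = (if k \<le> m then coeff r k else 0)" for k
    by (simp add: t_def coeff_sum coeff_monom)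
  have "monom 1 (Suc m) dvd r - t"
    unfolding monom_1_dvd_iff' by (simp add: coeff_t)
  then have "r mod monom 1 (Suc m) = t mod monom 1 (Suc m)"
    by (simp add: mod_eq_dvd_iff)
  also have "\<dots> = t"
  proof (rule mod_poly_less)
    have "degree t \<le> m"
      by (rule degree_le) (simp add: coeff_t)
    then show "degree t < degree (monom (1::real) (Suc m))"
      by (simp add: degree_monom_eq)
  qed
  finally show ?thesis
    by (simp add: tmult_def t_def r_def)
qed

lemma tmult_commute: "tmult m p q = tmult m q p"
  by (simp add: tmult_def mult.commute)

lemma tpow_eq_mod: "tpow m p k = p ^ k mod monom 1 (Suc m)"
  by (induction k) (simp_all add: mod_poly_less degree_monom_eq tmult_eq_mod mod_mult_right_eq)

lemma sum_tpow_eq_mod: "(\<Sum>k\<le>m. tpow m (1 - p) k) = (\<Sum>k\<le>m. (1 - p) ^ k) mod monom 1 (Suc m)"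
  by (simp add: tpow_eq_mod poly_mod_sum_left)

lemma tmult_sum_tpow_one_minus:
  assumes "coeff p 0 = 1"
  shows "tmult m p (\<Sum>k\<le>m. tpow m (1 - p) k) = 1"
  using mult_sum_power_one_minus_mod_monom[OF assms]
  by (simp add: tmult_eq_mod sum_tpow_eq_mod mod_mult_right_eq)

lemma sum_tpow_one_minus:
  "(\<Sum>k\<le>m. tpow m (1 - p) k)
     = (\<Sum>j\<le>m. smult ((-1) ^ j * (\<Sum>k=j..m. of_nat (k choose j))) (tpow m p j))"
proof -
  have expansion: "(\<Sum>k\<le>m. (1 - p) ^ k)
      = (\<Sum>j\<le>m. smult ((-1) ^ j * (\<Sum>k=j..m. of_nat (k choose j))) (p ^ j))"
    unfolding sum_power_one_minus
  proof (intro sum.cong refl)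
    fix j
    have "(-1) ^ j = [:(-1) ^ j :: real:]"
      by (induction j) simp_all
    then show "(-1) ^ j * of_nat (\<Sum>k=j..m. k choose j) * p ^ j
        = smult ((-1) ^ j * (\<Sum>k=j..m. of_nat (k choose j))) (p ^ j)"
      by (simp add: of_nat_poly mult.commute)
  qed
  have "(\<Sum>k\<le>m. tpow m (1 - p) k) = (\<Sum>k\<le>m. (1 - p) ^ k) mod monom 1 (Suc m)"
    by (rule sum_tpow_eq_mod)
  also have "\<dots> = (\<Sum>j\<le>m. smult ((-1) ^ j * (\<Sum>k=j..m. of_nat (k choose j))) (p ^ j))
      mod monom 1 (Suc m)"
    by (simp only: expansion)
  also have "\<dots> = (\<Sum>j\<le>m. smult ((-1) ^ j * (\<Sum>k=j..m. of_nat (k choose j))) (tpow m p j))"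
    by (simp add: poly_mod_sum_left mod_smult_left tpow_eq_mod)
  finally show ?thesis .
qed

theorem proposition2p1p3:
  fixes F :: "real \<Rightarrow> real" and m :: nat
  assumes "distribution_function F"
    and "integrable (interval_measure F) (\<lambda>x. \<bar>x\<bar> ^ m)"
  defines "S \<equiv> (\<Sum>k\<le>m. tpow m (1 - LF F m) k)"
  shows "tmult m (LF F m) S = 1 \<and> tmult m S (LF F m) = 1
    \<and> S = (\<Sum>j\<le>m. smult ((-1) ^ j * (\<Sum>k=j..m. of_nat (k choose j))) (tpow m (LF F m) j))"
proof -
  have "coeff (LF F m) 0 = 1"
    using moment_0_distribution_function[OF assms(1)] by (simp add: coeff_LF_0)
  then have "tmult m (LF F m) S = 1"
    unfolding S_def by (rule tmult_sum_tpow_one_minus)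
  moreover have "S = (\<Sum>j\<le>m. smult ((-1) ^ j * (\<Sum>k=j..m. of_nat (k choose j))) (tpow m (LF F m) j))"
    unfolding S_def by (rule sum_tpow_one_minus)
  ultimately show ?thesis
    using tmult_commute by metis
qed

end
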